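(* Let $G$ be an undirected graph, let $s,\Delta_s$ be positive integers, and let $D\subset V(G)$ be a subset of vertices. If there exists an $(s,\Delta_s)$-dissolution $(D,z)$ for $G$ (with this set $D$), then such a dissolution can be found by computing a maximum flow in a flow network with $|V(G)|+2$ nodes and $|E(G)|+2|V(G)|$ arcs in which every arc capacity is either $s$ or $\Delta_s$.
   Context: For $V'\subseteq V(G)$ let $Z(V',G):=\{(x,y)\mid x\in V',\ y\in V(G)\setminus V',\ \{x,y\}\in E(G)\}$. For positive integers $s,\Delta_s$, an $(s,\Delta_s)$-dissolution for $G$ is a pair $(D,z)$ with $D\subset V(G)$ and $z\colon Z(D,G)\to\{0,\dots,s\}$ such that (a) for every $v'\in D$: $\sum_{(v',v)\in Z(D,G)} z(v',v)=s$, and (b) for every $v\in V(G)\setminus D$: $\sum_{(v',v)\in Z(D,G)} z(v',v)=\Delta_s$. *)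

theory Defs
  imports Main
begin

definition ugraph :: "'a set \<Rightarrow> 'a set set \<Rightarrow> bool" where
  "ugraph V E \<longleftrightarrow> finite V \<and> (\<forall>e\<in>E. \<exists>x y. x \<in> V \<and> y \<in> V \<and> x \<noteq> y \<and> e = {x, y})"

definition Zset :: "'a set \<Rightarrow> 'a set \<Rightarrow> 'a set set \<Rightarrow> ('a \<times> 'a) set" where
  "Zset D V E = {(x, y). x \<in> D \<and> y \<in> V - D \<and> {x, y} \<in> E}"

text \<open>(D,z) is an (s,Delta_s)-dissolution for G = (V,E). The map z is only
  relevant on Z(D,G); there it takes values in {0..s}.\<close>
definition is_dissolution ::
  "'a set \<Rightarrow> 'a set set \<Rightarrow> nat \<Rightarrow> nat \<Rightarrow> 'a set \<Rightarrow> ('a \<times> 'a \<Rightarrow> nat) \<Rightarrow> bool" where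
  "is_dissolution V E s \<Delta> D z \<longleftrightarrow>
     D \<subset> V \<and>
     (\<forall>p\<in>Zset D V E. z p \<le> s) \<and>
     (\<forall>v'\<in>D. (\<Sum>p\<in>{p\<in>Zset D V E. fst p = v'}. z p) = s) \<and>
     (\<forall>v\<in>V - D. (\<Sum>p\<in>{p\<in>Zset D V E. snd p = v}. z p) = \<Delta>)"

datatype 'a fnode = Src | Snk | Vx 'a

definition net_nodes :: "'a set \<Rightarrow> 'a fnode set" where
  "net_nodes V = {Src, Snk} \<union> Vx ` V"

text \<open>Capacities of the dissolution network (0 = no arc).\<close>
fun net_cap :: "'a set \<Rightarrow> 'a set set \<Rightarrow> nat \<Rightarrow> nat \<Rightarrow> 'a set \<Rightarrow> 'a fnode \<Rightarrow> 'a fnode \<Rightarrow> nat" where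
  "net_cap V E s \<Delta> D Src (Vx v) = (if v \<in> D then s else 0)"
| "net_cap V E s \<Delta> D (Vx v) Snk = (if v \<in> V - D then \<Delta> else 0)"
| "net_cap V E s \<Delta> D (Vx x) (Vx y) = (if (x, y) \<in> Zset D V E then s else 0)"
| "net_cap V E s \<Delta> D _ _ = 0"

definition net_arcs :: "'a set \<Rightarrow> 'a set set \<Rightarrow> nat \<Rightarrow> nat \<Rightarrow> 'a set \<Rightarrow> ('a fnode \<times> 'a fnode) set" where
  "net_arcs V E s \<Delta> D = {(a, b). a \<in> net_nodes V \<and> b \<in> net_nodes V \<and> 0 < net_cap V E s \<Delta> D a b}"

definition is_flow :: "'n set \<Rightarrow> 'n \<Rightarrow> 'n \<Rightarrow> ('n \<Rightarrow> 'n \<Rightarrow> nat) \<Rightarrow> ('n \<Rightarrow> 'n \<Rightarrow> nat) \<Rightarrow> bool" where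
  "is_flow N src snk c f \<longleftrightarrow>
     (\<forall>a b. f a b \<le> c a b) \<and>
     (\<forall>a b. (a \<notin> N \<or> b \<notin> N) \<longrightarrow> f a b = 0) \<and>
     (\<forall>v\<in>N - {src, snk}. (\<Sum>u\<in>N. f u v) = (\<Sum>w\<in>N. f v w))"

definition flow_value :: "'n set \<Rightarrow> 'n \<Rightarrow> ('n \<Rightarrow> 'n \<Rightarrow> nat) \<Rightarrow> int" where
  "flow_value N src f = int (\<Sum>w\<in>N. f src w) - int (\<Sum>u\<in>N. f u src)"

definition is_max_flow :: "'n set \<Rightarrow> 'n \<Rightarrow> 'n \<Rightarrow> ('n \<Rightarrow> 'n \<Rightarrow> nat) \<Rightarrow> ('n \<Rightarrow> 'n \<Rightarrow> nat) \<Rightarrow> bool" where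
  "is_max_flow N src snk c f \<longleftrightarrow> is_flow N src snk c f \<and>
     (\<forall>g. is_flow N src snk c g \<longrightarrow> flow_value N src g \<le> flow_value N src f)"

end

theory Submission
  imports Defs
begin

text \<open>A dissolution, placed on the arcs of Z(D,G) and completed by saturating every source
  and sink arc, is a flow of value s |D|, the total capacity of the source arcs; hence every
  maximum flow saturates all source arcs. Double counting the weights of a dissolution gives
  s |D| = \<Delta> |V - D|, so by conservation the flow entering the sink is \<Delta> |V - D| and every
  sink arc is saturated as well. Conservation at the vertices then says exactly that the flow
  on Z(D,G) is a dissolution.\<close>

lemma finite_Zset: "finite V \<Longrightarrow> D \<subseteq> V \<Longrightarrow> finite (Zset D V E)"
  by (rule finite_subset[of _ "V \<times> V"]) (auto simp: Zset_def)

lemma ugraph_finite_edges: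
  assumes "ugraph V E"
  shows "finite E"
proof (rule finite_subset[of _ "Pow V"])
  show "E \<subseteq> Pow V"
  proof
    fix e assume "e \<in> E"
    then obtain x y where "x \<in> V" "y \<in> V" "e = {x, y}"
      using assms unfolding ugraph_def by blast
    then show "e \<in> Pow V" by simp
  qed
qed (use assms in \<open>simp add: ugraph_def\<close>)

lemma card_Zset_le_card_edges:
  assumes "ugraph V E"
  shows "card (Zset D V E) \<le> card E"
proof (rule card_inj_on_le[where f = "\<lambda>(x, y). {x, y}"])
  show "inj_on (\<lambda>(x, y). {x, y}) (Zset D V E)"
    unfolding inj_on_def Zset_def by (auto simp: doubleton_eq_iff)
  show "(\<lambda>(x, y). {x, y}) ` Zset D V E \<subseteq> E"
    unfolding Zset_def by auto
qed (rule ugraph_finite_edges[OF assms])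

lemma net_nodes_eq: "net_nodes V = insert Src (insert Snk (Vx ` V))"
  unfolding net_nodes_def by auto

lemma card_net_nodes:
  assumes "finite V"
  shows "card (net_nodes V) = card V + 2"
proof -
  have "card (Vx ` V) = card V"
    by (rule card_image) (auto simp: inj_on_def)
  then show ?thesis
    using assms by (simp add: net_nodes_eq image_iff)
qed

lemma sum_net_nodes:
  assumes "finite V"
  shows "(\<Sum>u\<in>net_nodes V. F u) = F Src + F Snk + (\<Sum>x\<in>V. F (Vx x))"
proof -
  have "(\<Sum>u\<in>Vx ` V. F u) = (\<Sum>x\<in>V. F (Vx x))"
    by (rule sum.reindex_cong[where l = Vx]) (auto simp: inj_on_def)
  then show ?thesis
    using assms by (simp add: net_nodes_eq image_iff add.assoc)
qed

lemma net_cap_pos_cases: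
  assumes "0 < net_cap V E s \<Delta> D a b"
  obtains d where "a = Src" "b = Vx d" "d \<in> D" "net_cap V E s \<Delta> D a b = s"
  | x y where "a = Vx x" "b = Vx y" "(x, y) \<in> Zset D V E" "net_cap V E s \<Delta> D a b = s"
  | v where "a = Vx v" "b = Snk" "v \<in> V - D" "net_cap V E s \<Delta> D a b = \<Delta>"
  using assms by (cases a; cases b) (auto split: if_splits)

lemma net_cap_arc_values:
  "(a, b) \<in> net_arcs V E s \<Delta> D \<Longrightarrow> net_cap V E s \<Delta> D a b \<in> {s, \<Delta>}"
  unfolding net_arcs_def by (auto elim: net_cap_pos_cases)

lemma card_net_arcs_le:
  assumes "ugraph V E" and "D \<subseteq> V"
  shows "card (net_arcs V E s \<Delta> D) \<le> card E + 2 * card V"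
proof -
  have fin: "finite V"
    using assms(1) by (simp add: ugraph_def)
  have fin_D: "finite D" and fin_Z: "finite (Zset D V E)"
    using fin assms(2) finite_subset finite_Zset by auto
  let ?A1 = "(\<lambda>d. (Src :: 'a fnode, Vx d)) ` D"
  let ?A2 = "(\<lambda>(x, y). (Vx x, Vx y)) ` Zset D V E"
  let ?A3 = "(\<lambda>v. (Vx v, Snk :: 'a fnode)) ` (V - D)"
  have "net_arcs V E s \<Delta> D \<subseteq> ?A1 \<union> ?A2 \<union> ?A3"
  proof
    fix p assume "p \<in> net_arcs V E s \<Delta> D"
    then obtain a b where p: "p = (a, b)" and "0 < net_cap V E s \<Delta> D a b"
      unfolding net_arcs_def by auto
    from this(2) show "p \<in> ?A1 \<union> ?A2 \<union> ?A3"
      by (rule net_cap_pos_cases) (auto simp: p)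
  qed
  then have "card (net_arcs V E s \<Delta> D) \<le> card (?A1 \<union> ?A2 \<union> ?A3)"
    by (rule card_mono[rotated]) (use fin fin_D fin_Z in auto)
  also have "\<dots> \<le> card (?A1 \<union> ?A2) + card ?A3"
    by (rule card_Un_le)
  also have "\<dots> \<le> card ?A1 + card ?A2 + card ?A3"
    using card_Un_le[of ?A1 ?A2] by simp
  also have "\<dots> \<le> card D + card (Zset D V E) + card (V - D)"
    by (intro add_mono card_image_le) (use fin fin_D fin_Z in auto)
  also have "\<dots> = card (Zset D V E) + card V"
    using fin assms(2) by (simp add: card_Diff_subset finite_subset card_mono)
  finally show ?thesis
    using card_Zset_le_card_edges[OF assms(1), of D] by linarith
qed

lemma sum_saturated:
  fixes f :: "'b \<Rightarrow> nat"
  assumes "finite A" and "\<forall>x\<in>A. f x \<le> c" and "c * card A \<le> sum f A"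
  shows "\<forall>x\<in>A. f x = c"
proof -
  have "sum f A = sum (\<lambda>_. c) A"
    using assms sum_mono[of A f "\<lambda>_. c"] by (simp add: mult.commute)
  then show ?thesis
    using sum_mono_inv[of f A "\<lambda>_. c"] assms(1,2) by simp
qed

context
  fixes V :: "'a set" and E :: "'a set set" and s \<Delta> :: nat and D :: "'a set"
  assumes fin: "finite V" and DV: "D \<subseteq> V"
begin

lemma le_net_cap_zero:
  "\<forall>a b. h a b \<le> net_cap V E s \<Delta> D a b \<Longrightarrow> net_cap V E s \<Delta> D a b = 0 \<Longrightarrow> h a b = 0"
  by (metis le_zero_eq)

lemma net_cap_outside_nodes:
  "a \<notin> net_nodes V \<or> b \<notin> net_nodes V \<Longrightarrow> net_cap V E s \<Delta> D a b = 0"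
  using DV by (cases a; cases b) (auto simp: net_nodes_def Zset_def)

lemma sum_out_Zset:
  assumes "\<forall>a b. h a b \<le> net_cap V E s \<Delta> D a b"
  shows "(\<Sum>y\<in>V. h (Vx d) (Vx y)) =
    (\<Sum>p\<in>{p\<in>Zset D V E. fst p = d}. (\<lambda>(x, y). h (Vx x) (Vx y)) p)"
proof -
  have "{p\<in>Zset D V E. fst p = d} = Pair d ` {y\<in>V. (d, y) \<in> Zset D V E}"
    by (auto simp: Zset_def)
  then have "(\<Sum>p\<in>{p\<in>Zset D V E. fst p = d}. (\<lambda>(x, y). h (Vx x) (Vx y)) p)
      = (\<Sum>y\<in>{y\<in>V. (d, y) \<in> Zset D V E}. h (Vx d) (Vx y))"
    by (simp add: sum.reindex inj_on_def)
  also have "\<dots> = (\<Sum>y\<in>V. h (Vx d) (Vx y))"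
    by (rule sum.mono_neutral_left) (use fin le_net_cap_zero[OF assms] in auto)
  finally show ?thesis by simp
qed

lemma sum_in_Zset:
  assumes "\<forall>a b. h a b \<le> net_cap V E s \<Delta> D a b"
  shows "(\<Sum>x\<in>V. h (Vx x) (Vx v)) =
    (\<Sum>p\<in>{p\<in>Zset D V E. snd p = v}. (\<lambda>(x, y). h (Vx x) (Vx y)) p)"
proof -
  have "{p\<in>Zset D V E. snd p = v} = (\<lambda>x. (x, v)) ` {x\<in>V. (x, v) \<in> Zset D V E}"
    using DV by (auto simp: Zset_def image_iff)
  then have "(\<Sum>p\<in>{p\<in>Zset D V E. snd p = v}. (\<lambda>(x, y). h (Vx x) (Vx y)) p)
      = (\<Sum>x\<in>{x\<in>V. (x, v) \<in> Zset D V E}. h (Vx x) (Vx v))"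
    by (simp add: sum.reindex inj_on_def)
  also have "\<dots> = (\<Sum>x\<in>V. h (Vx x) (Vx v))"
    by (rule sum.mono_neutral_left) (use fin le_net_cap_zero[OF assms] in auto)
  finally show ?thesis by simp
qed

lemma inflow_outflow_at_D:
  assumes cap: "\<forall>a b. h a b \<le> net_cap V E s \<Delta> D a b" and "d \<in> D"
  shows "(\<Sum>u\<in>net_nodes V. h u (Vx d)) = h Src (Vx d)"
    and "(\<Sum>w\<in>net_nodes V. h (Vx d) w) =
      (\<Sum>p\<in>{p\<in>Zset D V E. fst p = d}. (\<lambda>(x, y). h (Vx x) (Vx y)) p)"
proof -
  have "h (Vx x) (Vx d) = 0" "h Snk (Vx d) = 0" "h (Vx d) Src = 0" "h (Vx d) Snk = 0" for x
    using le_net_cap_zero[OF cap] \<open>d \<in> D\<close> by (auto simp: Zset_def)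
  then show "(\<Sum>u\<in>net_nodes V. h u (Vx d)) = h Src (Vx d)"
    and "(\<Sum>w\<in>net_nodes V. h (Vx d) w) =
      (\<Sum>p\<in>{p\<in>Zset D V E. fst p = d}. (\<lambda>(x, y). h (Vx x) (Vx y)) p)"
    by (simp_all add: sum_net_nodes[OF fin] sum_out_Zset[OF cap, symmetric])
qed

lemma inflow_outflow_outside_D:
  assumes cap: "\<forall>a b. h a b \<le> net_cap V E s \<Delta> D a b" and "v \<in> V - D"
  shows "(\<Sum>u\<in>net_nodes V. h u (Vx v)) =
      (\<Sum>p\<in>{p\<in>Zset D V E. snd p = v}. (\<lambda>(x, y). h (Vx x) (Vx y)) p)"
    and "(\<Sum>w\<in>net_nodes V. h (Vx v) w) = h (Vx v) Snk"
proof -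
  have "h (Vx v) (Vx y) = 0" "h Src (Vx v) = 0" "h Snk (Vx v) = 0" "h (Vx v) Src = 0" for y
    using le_net_cap_zero[OF cap] \<open>v \<in> V - D\<close> by (auto simp: Zset_def)
  then show "(\<Sum>u\<in>net_nodes V. h u (Vx v)) =
      (\<Sum>p\<in>{p\<in>Zset D V E. snd p = v}. (\<lambda>(x, y). h (Vx x) (Vx y)) p)"
    and "(\<Sum>w\<in>net_nodes V. h (Vx v) w) = h (Vx v) Snk"
    by (simp_all add: sum_net_nodes[OF fin] sum_in_Zset[OF cap, symmetric])
qed

lemma flow_le_net_cap:
  "is_flow (net_nodes V) Src Snk (net_cap V E s \<Delta> D) h \<Longrightarrow>
    \<forall>a b. h a b \<le> net_cap V E s \<Delta> D a b"
  by (simp add: is_flow_def)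

lemma flow_conservation:
  "is_flow (net_nodes V) Src Snk (net_cap V E s \<Delta> D) h \<Longrightarrow> v \<in> V \<Longrightarrow>
    (\<Sum>u\<in>net_nodes V. h u (Vx v)) = (\<Sum>w\<in>net_nodes V. h (Vx v) w)"
  by (simp add: is_flow_def net_nodes_def)

lemma flow_source_arc:
  assumes "is_flow (net_nodes V) Src Snk (net_cap V E s \<Delta> D) h" and "d \<in> D"
  shows "h Src (Vx d) = (\<Sum>p\<in>{p\<in>Zset D V E. fst p = d}. (\<lambda>(x, y). h (Vx x) (Vx y)) p)"
proof -
  note in_out = inflow_outflow_at_D[OF flow_le_net_cap[OF assms(1)] assms(2)]
  have "h Src (Vx d) = (\<Sum>u\<in>net_nodes V. h u (Vx d))"
    by (rule in_out(1)[symmetric])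
  also have "\<dots> = (\<Sum>w\<in>net_nodes V. h (Vx d) w)"
    using flow_conservation[OF assms(1)] assms(2) DV by blast
  finally show ?thesis
    by (simp add: in_out(2))
qed

lemma flow_sink_arc:
  assumes "is_flow (net_nodes V) Src Snk (net_cap V E s \<Delta> D) h" and "v \<in> V - D"
  shows "h (Vx v) Snk = (\<Sum>p\<in>{p\<in>Zset D V E. snd p = v}. (\<lambda>(x, y). h (Vx x) (Vx y)) p)"
proof -
  note in_out = inflow_outflow_outside_D[OF flow_le_net_cap[OF assms(1)] assms(2)]
  have "h (Vx v) Snk = (\<Sum>w\<in>net_nodes V. h (Vx v) w)"
    by (rule in_out(2)[symmetric])
  also have "\<dots> = (\<Sum>u\<in>net_nodes V. h u (Vx v))"
    using flow_conservation[OF assms(1)] assms(2) by simp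
  finally show ?thesis
    by (simp add: in_out(1))
qed

lemma flow_value_net:
  assumes "is_flow (net_nodes V) Src Snk (net_cap V E s \<Delta> D) h"
  shows "flow_value (net_nodes V) Src h = int (\<Sum>d\<in>D. h Src (Vx d))"
proof -
  note zero = le_net_cap_zero[OF flow_le_net_cap[OF assms]]
  have "(\<Sum>v\<in>V. h Src (Vx v)) = (\<Sum>d\<in>D. h Src (Vx d))"
    by (rule sum.mono_neutral_right[OF fin DV]) (simp add: zero)
  moreover have "h a Src = 0" for a
    by (rule zero) (cases a; simp)
  ultimately show ?thesis
    unfolding flow_value_def by (simp add: sum_net_nodes[OF fin] zero)
qed

lemma sum_Zset_by_tail_eq_by_head:
  "(\<Sum>d\<in>D. \<Sum>p\<in>{p\<in>Zset D V E. fst p = d}. F p) =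
    (\<Sum>v\<in>V - D. \<Sum>p\<in>{p\<in>Zset D V E. snd p = v}. F p)"
proof -
  have "finite D"
    using fin DV finite_subset by blast
  then have "(\<Sum>d\<in>D. \<Sum>p\<in>{p\<in>Zset D V E. fst p = d}. F p) = (\<Sum>p\<in>Zset D V E. F p)"
    by (intro sum.group finite_Zset[OF fin DV]) (auto simp: Zset_def)
  also have "\<dots> = (\<Sum>v\<in>V - D. \<Sum>p\<in>{p\<in>Zset D V E. snd p = v}. F p)"
    by (intro sum.group[symmetric] finite_Zset[OF fin DV]) (use fin in \<open>auto simp: Zset_def\<close>)
  finally show ?thesis .
qed

lemma dissolution_balance:
  assumes "is_dissolution V E s \<Delta> D z"
  shows "s * card D = \<Delta> * card (V - D)"
proof -
  have "s * card D = (\<Sum>d\<in>D. \<Sum>p\<in>{p\<in>Zset D V E. fst p = d}. z p)"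
    using assms by (simp add: is_dissolution_def)
  also have "\<dots> = (\<Sum>v\<in>V - D. \<Sum>p\<in>{p\<in>Zset D V E. snd p = v}. z p)"
    by (rule sum_Zset_by_tail_eq_by_head)
  also have "\<dots> = \<Delta> * card (V - D)"
    using assms by (simp add: is_dissolution_def)
  finally show ?thesis .
qed

lemma flow_of_dissolution:
  assumes z: "is_dissolution V E s \<Delta> D z"
  shows "\<exists>g. is_flow (net_nodes V) Src Snk (net_cap V E s \<Delta> D) g
    \<and> flow_value (net_nodes V) Src g = int (s * card D)"
proof -
  define g where "g a b = (case (a, b) of
      (Vx x, Vx y) \<Rightarrow> if (x, y) \<in> Zset D V E then z (x, y) else 0
    | _ \<Rightarrow> net_cap V E s \<Delta> D a b)" for a b
  have cap: "\<forall>a b. g a b \<le> net_cap V E s \<Delta> D a b"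
  proof (intro allI)
    fix a b
    show "g a b \<le> net_cap V E s \<Delta> D a b"
      using z unfolding g_def is_dissolution_def by (cases a; cases b) auto
  qed
  have g_Zset: "p \<in> Zset D V E \<Longrightarrow> (\<lambda>(x, y). g (Vx x) (Vx y)) p = z p" for p
    by (cases p) (simp add: g_def)
  have g_flow: "is_flow (net_nodes V) Src Snk (net_cap V E s \<Delta> D) g"
    unfolding is_flow_def
  proof (intro conjI ballI allI impI)
    show "g a b \<le> net_cap V E s \<Delta> D a b" for a b
      using cap by blast
    show "g a b = 0" if "a \<notin> net_nodes V \<or> b \<notin> net_nodes V" for a b
      using le_net_cap_zero[OF cap] net_cap_outside_nodes[OF that] by blast
    fix v assume "v \<in> net_nodes V - {Src, Snk}"
    then obtain x where v: "v = Vx x" "x \<in> V"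
      unfolding net_nodes_def by auto
    show "(\<Sum>u\<in>net_nodes V. g u v) = (\<Sum>w\<in>net_nodes V. g v w)"
    proof (cases "x \<in> D")
      case True
      then show ?thesis
        using z v inflow_outflow_at_D[OF cap True]
        by (simp add: g_Zset is_dissolution_def cong: sum.cong) (simp add: g_def)
    next
      case False
      then show ?thesis
        using z v inflow_outflow_outside_D[OF cap, of x]
        by (simp add: g_Zset is_dissolution_def cong: sum.cong) (simp add: g_def)
    qed
  qed
  moreover have "(\<Sum>d\<in>D. g Src (Vx d)) = s * card D"
    by (simp add: g_def)
  ultimately show ?thesis
    by (metis flow_value_net)
qed

lemma max_flow_saturates:
  assumes z: "is_dissolution V E s \<Delta> D z"
    and f: "is_max_flow (net_nodes V) Src Snk (net_cap V E s \<Delta> D) f"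
  shows "\<forall>d\<in>D. f Src (Vx d) = s" and "\<forall>v\<in>V - D. f (Vx v) Snk = \<Delta>"
proof -
  have flow: "is_flow (net_nodes V) Src Snk (net_cap V E s \<Delta> D) f"
    using f by (simp add: is_max_flow_def)
  note cap = flow_le_net_cap[OF flow]
  have "finite D"
    using fin DV finite_subset by blast
  obtain g where "is_flow (net_nodes V) Src Snk (net_cap V E s \<Delta> D) g"
    and "flow_value (net_nodes V) Src g = int (s * card D)"
    using flow_of_dissolution[OF z] by blast
  then have "int (s * card D) \<le> int (\<Sum>d\<in>D. f Src (Vx d))"
    using f flow_value_net[OF flow] by (auto simp: is_max_flow_def)
  then have source: "s * card D \<le> (\<Sum>d\<in>D. f Src (Vx d))"
    by linarith
  show saturated: "\<forall>d\<in>D. f Src (Vx d) = s"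
    using sum_saturated[OF \<open>finite D\<close> _ source] cap by (metis net_cap.simps(1))
  let ?F = "\<lambda>(x, y). f (Vx x) (Vx y)"
  have "(\<Sum>v\<in>V - D. f (Vx v) Snk) = (\<Sum>v\<in>V - D. \<Sum>p\<in>{p\<in>Zset D V E. snd p = v}. ?F p)"
    by (rule sum.cong) (simp_all add: flow_sink_arc[OF flow])
  also have "\<dots> = (\<Sum>d\<in>D. \<Sum>p\<in>{p\<in>Zset D V E. fst p = d}. ?F p)"
    by (rule sum_Zset_by_tail_eq_by_head[symmetric])
  also have "\<dots> = (\<Sum>d\<in>D. f Src (Vx d))"
    by (rule sum.cong) (simp_all add: flow_source_arc[OF flow])
  also have "\<dots> = \<Delta> * card (V - D)"
    using saturated dissolution_balance[OF z] by (simp add: mult.commute)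
  finally show "\<forall>v\<in>V - D. f (Vx v) Snk = \<Delta>"
    using sum_saturated[of "V - D" "\<lambda>v. f (Vx v) Snk" \<Delta>] fin cap
    by (metis eq_imp_le finite_Diff net_cap.simps(2))
qed

lemma saturating_flow_is_dissolution:
  assumes "D \<subset> V"
    and flow: "is_flow (net_nodes V) Src Snk (net_cap V E s \<Delta> D) f"
    and "\<forall>d\<in>D. f Src (Vx d) = s" and "\<forall>v\<in>V - D. f (Vx v) Snk = \<Delta>"
  shows "is_dissolution V E s \<Delta> D (\<lambda>(x, y). f (Vx x) (Vx y))"
  unfolding is_dissolution_def
proof (intro conjI ballI)
  show "(\<lambda>(x, y). f (Vx x) (Vx y)) p \<le> s" if "p \<in> Zset D V E" for p
    using that flow_le_net_cap[OF flow] by (cases p) (metis case_prod_conv net_cap.simps(3))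
qed (use assms flow_source_arc[OF flow] flow_sink_arc[OF flow] in auto)

end

theorem corollary1:
  fixes V :: "'a set" and E :: "'a set set" and s \<Delta> :: nat and D :: "'a set"
  assumes "ugraph V E" and "0 < s" and "0 < \<Delta>" and "D \<subset> V"
    and "\<exists>z. is_dissolution V E s \<Delta> D z"
  shows "card (net_nodes V) = card V + 2
    \<and> card (net_arcs V E s \<Delta> D) \<le> card E + 2 * card V
    \<and> (\<forall>(a, b)\<in>net_arcs V E s \<Delta> D. net_cap V E s \<Delta> D a b \<in> {s, \<Delta>})
    \<and> (\<forall>f. is_max_flow (net_nodes V) Src Snk (net_cap V E s \<Delta> D) f \<longrightarrow>
          is_dissolution V E s \<Delta> D (\<lambda>(x, y). f (Vx x) (Vx y)))"
proof (intro conjI allI impI)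
  have fin: "finite V" and DV: "D \<subseteq> V"
    using assms(1,4) by (auto simp: ugraph_def)
  show "card (net_nodes V) = card V + 2"
    by (rule card_net_nodes[OF fin])
  show "card (net_arcs V E s \<Delta> D) \<le> card E + 2 * card V"
    by (rule card_net_arcs_le[OF assms(1) DV])
  show "\<forall>(a, b)\<in>net_arcs V E s \<Delta> D. net_cap V E s \<Delta> D a b \<in> {s, \<Delta>}"
    using net_cap_arc_values by blast
  fix f assume max: "is_max_flow (net_nodes V) Src Snk (net_cap V E s \<Delta> D) f"
  obtain z where z: "is_dissolution V E s \<Delta> D z"
    using assms(5) by blast
  show "is_dissolution V E s \<Delta> D (\<lambda>(x, y). f (Vx x) (Vx y))"
    using saturating_flow_is_dissolution[OF fin DV assms(4)] max_flow_saturates[OF fin DV z max]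
      max by (simp add: is_max_flow_def)
qed

end
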